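(* Let $\mathcal{A}\subseteq\mathcal{B}$ be sub-$\sigma$-algebras of a complete probability space $(\Omega,\mathcal{F},P)$, where $\mathcal{B}$ is generated by a countable family of events (together with the $P$-null events). Let $L$ be a linear subspace of $L_\infty(\mathcal{B})$. Let $M:L^+_\infty(\mathcal{B})\to L^+_\infty(\mathcal{A})$ be a regular sublinear operator and $m:L^+_\infty(\mathcal{B})\to L^+_\infty(\mathcal{A})$ a superlinear operator. Let $x:L\to L_\infty(\mathcal{A})$ be a linear operator satisfying \[m(Z)+x(X)\le M(Y)\qquad \text{for all }X\in L,\ Y,Z\in L^+_\infty(\mathcal{B}) \text{ with } Z+X\le Y.\] Then $x$ admits a monotone linear extension $x:L_\infty(\mathcal{B})\to L_\infty(\mathcal{A})$ which is continuous from above and satisfies \[m(Z)+x(X)\le M(Y)\qquad \text{for all }X\in L_\infty(\mathcal{B}),\ Y,Z\in L^+_\infty(\mathcal{B}) \text{ with } Z+X\le Y,\] equivalently $m(X)\le x(X)\le M(X)$ for all $X\in L^+_\infty(\mathcal{B})$.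
   Context: All (in)equalities between random variables hold $P$-a.s. Sublinear: $M(X+Y)\le M(X)+M(Y)$, $M(\lambda X)=\lambda M(X)$ for real $\lambda\ge0$. Superlinear: $m(X+Y)\ge m(X)+m(Y)$, $m(\lambda X)=\lambda m(X)$ for real $\lambda\ge0$. Regular: for every nonincreasing sequence $X_n\downarrow0$ $P$-a.s., $M(X_n)\to0$ $P$-a.s. Monotone: $X\ge X'\Rightarrow x(X)\ge x(X')$. Continuous from above: for every nonincreasing sequence $X_n$ with $P$-a.s. limit $X$, $x(X_n)\downarrow x(X)$ $P$-a.s. *)

theory Defs
  imports "HOL-Probability.Probability"
begin

text \<open>Elements of L_infinity(B) are represented by B-measurable, P-essentially bounded
  real functions; all (in)equalities are understood P-a.s.  Operators on L_infinity are
  represented as maps on functions that respect P-a.s. equality on their domain.\<close>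

definition Linf :: "'a measure \<Rightarrow> 'a measure \<Rightarrow> ('a \<Rightarrow> real) set" where
  "Linf P B = {X. X \<in> borel_measurable B \<and> (\<exists>c. AE \<omega> in P. \<bar>X \<omega>\<bar> \<le> c)}"

definition Linf_pos :: "'a measure \<Rightarrow> 'a measure \<Rightarrow> ('a \<Rightarrow> real) set" where
  "Linf_pos P B = {X \<in> Linf P B. AE \<omega> in P. 0 \<le> X \<omega>}"

definition ae_le :: "'a measure \<Rightarrow> ('a \<Rightarrow> real) \<Rightarrow> ('a \<Rightarrow> real) \<Rightarrow> bool" where
  "ae_le P X Y \<longleftrightarrow> (AE \<omega> in P. X \<omega> \<le> Y \<omega>)"

definition ae_eq :: "'a measure \<Rightarrow> ('a \<Rightarrow> real) \<Rightarrow> ('a \<Rightarrow> real) \<Rightarrow> bool" where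
  "ae_eq P X Y \<longleftrightarrow> (AE \<omega> in P. X \<omega> = Y \<omega>)"

definition op_between :: "'a measure \<Rightarrow> ('a \<Rightarrow> real) set \<Rightarrow> ('a \<Rightarrow> real) set
    \<Rightarrow> (('a \<Rightarrow> real) \<Rightarrow> ('a \<Rightarrow> real)) \<Rightarrow> bool" where
  "op_between P D E T \<longleftrightarrow> (\<forall>X\<in>D. T X \<in> E) \<and>
     (\<forall>X\<in>D. \<forall>Y\<in>D. ae_eq P X Y \<longrightarrow> ae_eq P (T X) (T Y))"

definition sublinear_op :: "'a measure \<Rightarrow> ('a \<Rightarrow> real) set
    \<Rightarrow> (('a \<Rightarrow> real) \<Rightarrow> ('a \<Rightarrow> real)) \<Rightarrow> bool" where
  "sublinear_op P D T \<longleftrightarrow>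
     (\<forall>X\<in>D. \<forall>Y\<in>D. ae_le P (T (\<lambda>\<omega>. X \<omega> + Y \<omega>)) (\<lambda>\<omega>. T X \<omega> + T Y \<omega>)) \<and>
     (\<forall>X\<in>D. \<forall>c::real. c \<ge> 0 \<longrightarrow> ae_eq P (T (\<lambda>\<omega>. c * X \<omega>)) (\<lambda>\<omega>. c * T X \<omega>))"

definition superlinear_op :: "'a measure \<Rightarrow> ('a \<Rightarrow> real) set
    \<Rightarrow> (('a \<Rightarrow> real) \<Rightarrow> ('a \<Rightarrow> real)) \<Rightarrow> bool" where
  "superlinear_op P D T \<longleftrightarrow>
     (\<forall>X\<in>D. \<forall>Y\<in>D. ae_le P (\<lambda>\<omega>. T X \<omega> + T Y \<omega>) (T (\<lambda>\<omega>. X \<omega> + Y \<omega>))) \<and>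
     (\<forall>X\<in>D. \<forall>c::real. c \<ge> 0 \<longrightarrow> ae_eq P (T (\<lambda>\<omega>. c * X \<omega>)) (\<lambda>\<omega>. c * T X \<omega>))"

definition linear_op :: "'a measure \<Rightarrow> ('a \<Rightarrow> real) set
    \<Rightarrow> (('a \<Rightarrow> real) \<Rightarrow> ('a \<Rightarrow> real)) \<Rightarrow> bool" where
  "linear_op P D T \<longleftrightarrow>
     (\<forall>X\<in>D. \<forall>Y\<in>D. ae_eq P (T (\<lambda>\<omega>. X \<omega> + Y \<omega>)) (\<lambda>\<omega>. T X \<omega> + T Y \<omega>)) \<and>
     (\<forall>X\<in>D. \<forall>c::real. ae_eq P (T (\<lambda>\<omega>. c * X \<omega>)) (\<lambda>\<omega>. c * T X \<omega>))"

definition regular_op :: "'a measure \<Rightarrow> ('a \<Rightarrow> real) set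
    \<Rightarrow> (('a \<Rightarrow> real) \<Rightarrow> ('a \<Rightarrow> real)) \<Rightarrow> bool" where
  "regular_op P D T \<longleftrightarrow>
     (\<forall>Xs :: nat \<Rightarrow> 'a \<Rightarrow> real. (\<forall>n. Xs n \<in> D) \<longrightarrow>
        (AE \<omega> in P. decseq (\<lambda>n. Xs n \<omega>) \<and> (\<lambda>n. Xs n \<omega>) \<longlonglongrightarrow> 0) \<longrightarrow>
        (AE \<omega> in P. (\<lambda>n. T (Xs n) \<omega>) \<longlonglongrightarrow> 0))"

definition monotone_op :: "'a measure \<Rightarrow> ('a \<Rightarrow> real) set
    \<Rightarrow> (('a \<Rightarrow> real) \<Rightarrow> ('a \<Rightarrow> real)) \<Rightarrow> bool" where
  "monotone_op P D T \<longleftrightarrow> (\<forall>X\<in>D. \<forall>Y\<in>D. ae_le P Y X \<longrightarrow> ae_le P (T Y) (T X))"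

definition cont_above_op :: "'a measure \<Rightarrow> ('a \<Rightarrow> real) set
    \<Rightarrow> (('a \<Rightarrow> real) \<Rightarrow> ('a \<Rightarrow> real)) \<Rightarrow> bool" where
  "cont_above_op P D T \<longleftrightarrow>
     (\<forall>Xs :: nat \<Rightarrow> 'a \<Rightarrow> real. \<forall>X. (\<forall>n. Xs n \<in> D) \<longrightarrow> X \<in> D \<longrightarrow>
        (AE \<omega> in P. decseq (\<lambda>n. Xs n \<omega>) \<and> (\<lambda>n. Xs n \<omega>) \<longlonglongrightarrow> X \<omega>) \<longrightarrow>
        (AE \<omega> in P. decseq (\<lambda>n. T (Xs n) \<omega>) \<and> (\<lambda>n. T (Xs n) \<omega>) \<longlonglongrightarrow> T X \<omega>))"

definition lin_subspace :: "('a \<Rightarrow> real) set \<Rightarrow> bool" where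
  "lin_subspace L \<longleftrightarrow> (\<lambda>\<omega>. 0) \<in> L \<and>
     (\<forall>X\<in>L. \<forall>Y\<in>L. (\<lambda>\<omega>. X \<omega> + Y \<omega>) \<in> L) \<and>
     (\<forall>X\<in>L. \<forall>c::real. (\<lambda>\<omega>. c * X \<omega>) \<in> L)"

end

theory Submission
  imports Defs
begin

(* A Hahn-Banach argument with conditional values as scalars.  Call an operator T on an
   a.s.-closed subspace D of L_infinity(B) admissible if it is linear and m(Z) + T(X) <= M(Y)
   whenever Z + X <= Y.  When adjoining a new direction X0, positive homogeneity of m and M turns
   every such constraint on d + s X0 (s <> 0) into a lower or an upper bound for the value of
   T(X0), and super-/sublinearity shows that every lower bound lies a.s. below every upper bound.
   The essential supremum of the lower bounds is an A-measurable admissible value: it is attained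
   along a countable subfamily, namely one maximising the integral of the pointwise supremum.
   Zorn's lemma then gives an admissible operator on all of L_infinity(B).  Choosing Z = 0 or
   Y = 0 yields m <= x <= M on nonnegative arguments, hence monotonicity, and
   0 <= x(X_n) - x(X) <= M(X_n - X) --> 0 by regularity of M gives continuity from above. *)

lemma Linf_add [intro]: "X \<in> Linf P N \<Longrightarrow> Y \<in> Linf P N \<Longrightarrow> (\<lambda>\<omega>. X \<omega> + Y \<omega>) \<in> Linf P N"
proof -
  assume "X \<in> Linf P N" "Y \<in> Linf P N"
  moreover from this obtain a b where "AE \<omega> in P. \<bar>X \<omega>\<bar> \<le> a" "AE \<omega> in P. \<bar>Y \<omega>\<bar> \<le> b"
    by (auto simp: Linf_def)
  then have "AE \<omega> in P. \<bar>X \<omega> + Y \<omega>\<bar> \<le> a + b" by eventually_elim auto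
  ultimately show ?thesis by (auto simp: Linf_def)
qed

lemma Linf_scale [intro]: "X \<in> Linf P N \<Longrightarrow> (\<lambda>\<omega>. c * X \<omega>) \<in> Linf P N"
proof -
  assume "X \<in> Linf P N"
  moreover from this obtain a where "AE \<omega> in P. \<bar>X \<omega>\<bar> \<le> a" by (auto simp: Linf_def)
  then have "AE \<omega> in P. \<bar>c * X \<omega>\<bar> \<le> \<bar>c\<bar> * a"
    by eventually_elim (auto simp: abs_mult mult_left_mono)
  ultimately show ?thesis by (auto simp: Linf_def)
qed

lemma Linf_diff [intro]: "X \<in> Linf P N \<Longrightarrow> Y \<in> Linf P N \<Longrightarrow> (\<lambda>\<omega>. X \<omega> - Y \<omega>) \<in> Linf P N"
proof -
  assume "X \<in> Linf P N" "Y \<in> Linf P N"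
  then have "(\<lambda>\<omega>. X \<omega> + (-1) * Y \<omega>) \<in> Linf P N" by (intro Linf_add Linf_scale)
  then show ?thesis by simp
qed

lemma Linf_const [intro]: "(\<lambda>\<omega>. c) \<in> Linf P N"
  by (auto simp: Linf_def)

lemma Linf_ae_bounds:
  assumes "X \<in> Linf P N"
  obtains a b where "AE \<omega> in P. a \<le> X \<omega>" "AE \<omega> in P. X \<omega> \<le> b"
proof -
  obtain c where "AE \<omega> in P. \<bar>X \<omega>\<bar> \<le> c" using assms by (auto simp: Linf_def)
  then have "AE \<omega> in P. - c \<le> X \<omega>" "AE \<omega> in P. X \<omega> \<le> c" by (auto elim: eventually_mono)
  then show thesis by (rule that)
qed

lemma Linf_pos_Linf: "X \<in> Linf_pos P N \<Longrightarrow> X \<in> Linf P N"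
  by (simp add: Linf_pos_def)

lemma Linf_posI: "X \<in> Linf P N \<Longrightarrow> AE \<omega> in P. 0 \<le> X \<omega> \<Longrightarrow> X \<in> Linf_pos P N"
  by (simp add: Linf_pos_def)

lemma Linf_pos_nonneg: "X \<in> Linf_pos P N \<Longrightarrow> AE \<omega> in P. 0 \<le> X \<omega>"
  by (simp add: Linf_pos_def)

lemma Linf_pos_add [intro]:
  "X \<in> Linf_pos P N \<Longrightarrow> Y \<in> Linf_pos P N \<Longrightarrow> (\<lambda>\<omega>. X \<omega> + Y \<omega>) \<in> Linf_pos P N"
  unfolding Linf_pos_def by (auto elim!: eventually_elim2)

lemma Linf_pos_scale [intro]: "X \<in> Linf_pos P N \<Longrightarrow> 0 \<le> c \<Longrightarrow> (\<lambda>\<omega>. c * X \<omega>) \<in> Linf_pos P N"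
  unfolding Linf_pos_def by (auto elim!: eventually_mono)

lemma Linf_pos_zero [intro]: "(\<lambda>\<omega>. 0) \<in> Linf_pos P N"
  by (auto simp: Linf_pos_def)

lemma Linf_pos_part [intro]: "X \<in> Linf P N \<Longrightarrow> (\<lambda>\<omega>. max 0 (X \<omega>)) \<in> Linf_pos P N"
proof -
  assume "X \<in> Linf P N"
  moreover from this obtain a where "AE \<omega> in P. \<bar>X \<omega>\<bar> \<le> a" by (auto simp: Linf_def)
  then have "AE \<omega> in P. \<bar>max 0 (X \<omega>)\<bar> \<le> a" by eventually_elim auto
  ultimately show ?thesis by (auto simp: Linf_def Linf_pos_def)
qed

lemma lin_subspaceD:
  assumes "lin_subspace D"
  shows lin_subspace_zero: "(\<lambda>\<omega>. 0) \<in> D"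
    and lin_subspace_add: "X \<in> D \<Longrightarrow> Y \<in> D \<Longrightarrow> (\<lambda>\<omega>. X \<omega> + Y \<omega>) \<in> D"
    and lin_subspace_scale: "X \<in> D \<Longrightarrow> (\<lambda>\<omega>. c * X \<omega>) \<in> D"
  using assms by (auto simp: lin_subspace_def)

lemma op_betweenD:
  assumes "op_between P D E T"
  shows op_between_mem: "X \<in> D \<Longrightarrow> T X \<in> E"
    and op_between_cong: "X \<in> D \<Longrightarrow> Y \<in> D \<Longrightarrow> ae_eq P X Y \<Longrightarrow> ae_eq P (T X) (T Y)"
  using assms by (auto simp: op_between_def)

lemma linear_opD:
  assumes "linear_op P D T"
  shows linear_op_add: "X \<in> D \<Longrightarrow> Y \<in> D \<Longrightarrow> AE \<omega> in P. T (\<lambda>\<omega>. X \<omega> + Y \<omega>) \<omega> = T X \<omega> + T Y \<omega>"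
    and linear_op_scale: "X \<in> D \<Longrightarrow> AE \<omega> in P. T (\<lambda>\<omega>. c * X \<omega>) \<omega> = c * T X \<omega>"
  using assms by (auto simp: linear_op_def ae_eq_def)

lemma linear_op_diff:
  assumes "linear_op P D T" "lin_subspace D" "X \<in> D" "Y \<in> D"
  shows "AE \<omega> in P. T (\<lambda>\<omega>. X \<omega> - Y \<omega>) \<omega> = T X \<omega> - T Y \<omega>"
proof -
  have "(\<lambda>\<omega>. (-1) * Y \<omega>) \<in> D" using assms(2,4) by (rule lin_subspace_scale)
  from linear_op_add[OF assms(1,3) this] linear_op_scale[OF assms(1,4), of "-1"]
  show ?thesis by eventually_elim simp
qed

lemma ae_eq_refl [simp]: "ae_eq P X X"
  by (simp add: ae_eq_def)

lemma ae_eq_sym: "ae_eq P X Y \<Longrightarrow> ae_eq P Y X"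
  unfolding ae_eq_def by (auto elim: eventually_mono)

lemma ae_eq_trans [trans]: "ae_eq P X Y \<Longrightarrow> ae_eq P Y Z \<Longrightarrow> ae_eq P X Z"
  unfolding ae_eq_def by (auto elim: eventually_elim2)

lemma decseq_tendsto_squeeze:
  fixes a e :: "nat \<Rightarrow> real"
  assumes "\<And>n. a (Suc n) \<le> a n" and "\<And>n. 0 \<le> a n - b \<and> a n - b \<le> e n" and "e \<longlonglongrightarrow> 0"
  shows "decseq a \<and> a \<longlonglongrightarrow> b"
proof
  show "decseq a" using assms(1) by (simp add: decseq_Suc_iff)
  have "(\<lambda>n. a n - b) \<longlonglongrightarrow> 0"
  proof (rule real_tendsto_sandwich[where f="\<lambda>n. 0" and h=e])
    show "\<forall>\<^sub>F n in sequentially. 0 \<le> a n - b" "\<forall>\<^sub>F n in sequentially. a n - b \<le> e n"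
      using assms(2) by simp_all
  qed (use assms(3) in simp_all)
  then show "a \<longlonglongrightarrow> b" by (rule LIM_zero_cancel)
qed

subsection \<open>Essential supremum of a family of functions\<close>

lemma countable_subset_maximizes:
  fixes V :: "'b set \<Rightarrow> real"
  assumes bounded: "\<And>C. C \<subseteq> F \<Longrightarrow> countable C \<Longrightarrow> V C \<le> c"
    and mono: "\<And>C C'. C \<subseteq> C' \<Longrightarrow> C' \<subseteq> F \<Longrightarrow> countable C' \<Longrightarrow> V C \<le> V C'"
  obtains C where "C \<subseteq> F" "countable C"
    "\<And>C'. C \<subseteq> C' \<Longrightarrow> C' \<subseteq> F \<Longrightarrow> countable C' \<Longrightarrow> V C' = V C"
proof -
  define \<C> where "\<C> = {C. C \<subseteq> F \<and> countable C}"
  define v where "v = (SUP C\<in>\<C>. V C)"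
  have bdd: "bdd_above (V ` \<C>)" using bounded by (auto simp: \<C>_def intro!: bdd_aboveI)
  have le_v: "V C \<le> v" if "C \<in> \<C>" for C
    unfolding v_def using bdd that by (rule cSUP_upper2) simp
  have "\<exists>C\<in>\<C>. v - inverse (real (Suc k)) < V C" for k
  proof -
    have "v - inverse (real (Suc k)) < v" by simp
    moreover have "{} \<in> \<C>" by (simp add: \<C>_def)
    ultimately show ?thesis using bdd unfolding v_def by (subst (asm) less_cSUP_iff) auto
  qed
  then obtain Ck where Ck: "\<And>k. Ck k \<in> \<C>" "\<And>k. v - inverse (real (Suc k)) < V (Ck k)"
    by metis
  define C where "C = (\<Union>k. Ck k)"
  have C: "C \<in> \<C>" using Ck(1) by (auto simp: \<C>_def C_def)
  have "V C = v"
  proof (rule antisym)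
    show "v \<le> V C"
    proof (rule field_le_epsilon)
      fix e :: real assume "0 < e"
      then obtain k where "inverse (real (Suc k)) < e" using reals_Archimedean by blast
      moreover have "V (Ck k) \<le> V C" using C by (intro mono) (auto simp: C_def \<C>_def)
      ultimately show "v \<le> V C + e" using Ck(2)[of k] by linarith
    qed
  qed (rule le_v[OF C])
  moreover have "V C \<le> V C'" "V C' \<le> v" if "C \<subseteq> C'" "C' \<subseteq> F" "countable C'" for C'
    using that by (auto intro!: mono le_v simp: \<C>_def)
  ultimately show ?thesis using that C unfolding \<C>_def by (metis (mono_tags) antisym mem_Collect_eq)
qed

definition clamped_SUP :: "real \<Rightarrow> real \<Rightarrow> ('a \<Rightarrow> real) set \<Rightarrow> 'a \<Rightarrow> real" where
  "clamped_SUP lo hi C \<omega> = (SUP f\<in>C. max lo (min hi (f \<omega>)))"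

lemma bdd_above_clamped: "bdd_above ((\<lambda>f. max lo (min (hi :: real) (f \<omega>))) ` C)"
  by (rule bdd_aboveI[where M="max lo hi"]) auto

lemma clamped_SUP_upper: "f \<in> C \<Longrightarrow> max (lo :: real) (min hi (f \<omega>)) \<le> clamped_SUP lo hi C \<omega>"
  unfolding clamped_SUP_def by (erule cSUP_upper[OF _ bdd_above_clamped])

lemma clamped_SUP_least:
  "C \<noteq> {} \<Longrightarrow> (\<And>f. f \<in> C \<Longrightarrow> max lo (min (hi :: real) (f \<omega>)) \<le> b) \<Longrightarrow> clamped_SUP lo hi C \<omega> \<le> b"
  unfolding clamped_SUP_def by (rule cSUP_least)

lemma clamped_SUP_mono: "C \<noteq> {} \<Longrightarrow> C \<subseteq> C' \<Longrightarrow> clamped_SUP lo hi C \<omega> \<le> clamped_SUP lo hi C' \<omega>"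
  by (intro clamped_SUP_least clamped_SUP_upper) auto

lemma clamped_SUP_abs_le: "C \<noteq> {} \<Longrightarrow> \<bar>clamped_SUP lo hi C \<omega>\<bar> \<le> \<bar>lo\<bar> + \<bar>hi\<bar>"
proof -
  assume "C \<noteq> {}"
  then obtain f where "f \<in> C" by blast
  then have "lo \<le> clamped_SUP lo hi C \<omega>"
    using clamped_SUP_upper[of f C lo hi \<omega>] by linarith
  moreover have "clamped_SUP lo hi C \<omega> \<le> max lo hi"
    using \<open>C \<noteq> {}\<close> by (rule clamped_SUP_least) simp
  ultimately show ?thesis by linarith
qed

lemma borel_measurable_clamped_SUP:
  "countable C \<Longrightarrow> C \<subseteq> borel_measurable A \<Longrightarrow> clamped_SUP lo hi C \<in> borel_measurable A"
  unfolding clamped_SUP_def using bdd_above_clamped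
  by (intro borel_measurable_cSUP) (auto intro!: borel_measurable_max borel_measurable_min)

text \<open>The essential supremum of a possibly uncountable family: the clamped supremum over a
  countable subfamily with maximal integral dominates every member of the family a.s.\<close>
lemma ae_least_upper_bound_exists:
  fixes F :: "('a \<Rightarrow> real) set"
  assumes "prob_space P" and "subalgebra P A"
    and F_meas: "F \<subseteq> borel_measurable A"
    and F_le: "\<And>f. f \<in> F \<Longrightarrow> AE \<omega> in P. f \<omega> \<le> hi"
    and f0: "f0 \<in> F" and f0_ge: "AE \<omega> in P. lo \<le> f0 \<omega>"
  obtains g where "g \<in> Linf P A" "\<And>f. f \<in> F \<Longrightarrow> AE \<omega> in P. f \<omega> \<le> g \<omega>"
    "\<And>h. (\<And>f. f \<in> F \<Longrightarrow> AE \<omega> in P. f \<omega> \<le> h \<omega>) \<Longrightarrow> AE \<omega> in P. g \<omega> \<le> h \<omega>"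
proof -
  interpret prob_space P by fact
  define G where "G C = clamped_SUP lo hi (insert f0 C)" for C
  have G_meas: "G C \<in> borel_measurable A" if "C \<subseteq> F" "countable C" for C
    unfolding G_def using that F_meas f0 by (intro borel_measurable_clamped_SUP) auto
  have G_bounded: "AE \<omega> in P. \<bar>G C \<omega>\<bar> \<le> \<bar>lo\<bar> + \<bar>hi\<bar>" for C
    unfolding G_def by (intro always_eventually allI clamped_SUP_abs_le) simp
  have G_Linf: "G C \<in> Linf P A" if "C \<subseteq> F" "countable C" for C
    using G_meas[OF that] G_bounded unfolding Linf_def by blast
  have G_int: "integrable P (G C)" if "C \<subseteq> F" "countable C" for C
    using measurable_from_subalg[OF \<open>subalgebra P A\<close> G_meas[OF that]] G_bounded
    by (intro integrable_const_bound[where B="\<bar>lo\<bar> + \<bar>hi\<bar>"]) auto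
  have G_mono: "G C \<omega> \<le> G C' \<omega>" if "C \<subseteq> C'" for C C' \<omega>
    unfolding G_def using that by (intro clamped_SUP_mono) auto
  obtain C where C: "C \<subseteq> F" "countable C"
    and C_max: "\<And>C'. C \<subseteq> C' \<Longrightarrow> C' \<subseteq> F \<Longrightarrow> countable C' \<Longrightarrow>
                  integral\<^sup>L P (G C') = integral\<^sup>L P (G C)"
  proof (rule countable_subset_maximizes[where V="\<lambda>C. integral\<^sup>L P (G C)"])
    show "integral\<^sup>L P (G C) \<le> \<bar>lo\<bar> + \<bar>hi\<bar>" if "C \<subseteq> F" "countable C" for C
      using G_bounded G_int[OF that]
      by (intro integral_le_const) (auto simp: abs_le_iff elim: eventually_mono)
    show "integral\<^sup>L P (G C) \<le> integral\<^sup>L P (G C')" if "C \<subseteq> C'" "C' \<subseteq> F" "countable C'" for C C'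
      using that G_mono countable_subset[OF that(1,3)] by (intro integral_mono G_int) auto
  qed blast
  show ?thesis
  proof (rule that[OF G_Linf[OF C]])
    fix f assume f: "f \<in> F"
    let ?C' = "insert f C"
    have C': "?C' \<subseteq> F" "countable ?C'" using f C by auto
    have "integral\<^sup>L P (\<lambda>\<omega>. G ?C' \<omega> - G C \<omega>) = 0"
      using C_max[of ?C'] C' C by (auto simp: G_int)
    then have "AE \<omega> in P. G ?C' \<omega> - G C \<omega> = 0"
      using C' C G_mono[of C ?C'] by (subst (asm) integral_nonneg_eq_0_iff_AE) (auto intro: G_int)
    with F_le[OF f] show "AE \<omega> in P. f \<omega> \<le> G C \<omega>"
    proof eventually_elim
      case (elim \<omega>)
      then show ?case using clamped_SUP_upper[of f "insert f0 ?C'" lo hi \<omega>] by (simp add: G_def)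
    qed
  next
    fix h assume h: "\<And>f. f \<in> F \<Longrightarrow> AE \<omega> in P. f \<omega> \<le> h \<omega>"
    have "AE \<omega> in P. \<forall>f\<in>insert f0 C. f \<omega> \<le> h \<omega>"
      using h C f0 by (subst AE_ball_countable) auto
    with f0_ge show "AE \<omega> in P. G C \<omega> \<le> h \<omega>"
    proof eventually_elim
      case (elim \<omega>)
      then show ?case unfolding G_def by (intro clamped_SUP_least) auto
    qed
  qed
qed

subsection \<open>Adjoining one direction to a subspace\<close>

definition ae_closed :: "'a measure \<Rightarrow> ('a \<Rightarrow> real) set \<Rightarrow> ('a \<Rightarrow> real) set \<Rightarrow> bool" where
  "ae_closed P V D \<longleftrightarrow> (\<forall>W\<in>V. \<forall>d\<in>D. ae_eq P W d \<longrightarrow> W \<in> D)"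

definition ae_span :: "'a measure \<Rightarrow> 'a measure \<Rightarrow> ('a \<Rightarrow> real) set \<Rightarrow> ('a \<Rightarrow> real)
    \<Rightarrow> ('a \<Rightarrow> real) set" where
  "ae_span P B D X0 = {W \<in> Linf P B. \<exists>d\<in>D. \<exists>s. ae_eq P W (\<lambda>\<omega>. d \<omega> + s * X0 \<omega>)}"

lemma ae_spanI:
  "W \<in> Linf P B \<Longrightarrow> d \<in> D \<Longrightarrow> ae_eq P W (\<lambda>\<omega>. d \<omega> + s * X0 \<omega>) \<Longrightarrow> W \<in> ae_span P B D X0"
  by (auto simp: ae_span_def)

lemma ae_spanE:
  assumes "W \<in> ae_span P B D X0"
  obtains d s where "d \<in> D" "ae_eq P W (\<lambda>\<omega>. d \<omega> + s * X0 \<omega>)"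
  using assms by (auto simp: ae_span_def)

lemma ae_span_Linf: "ae_span P B D X0 \<subseteq> Linf P B"
  by (auto simp: ae_span_def)

lemma ae_span_superset:
  assumes "D \<subseteq> Linf P B" "lin_subspace D" "X0 \<in> Linf P B"
  shows "D \<subseteq> ae_span P B D X0" and "X0 \<in> ae_span P B D X0"
proof -
  show "D \<subseteq> ae_span P B D X0"
  proof
    fix d assume "d \<in> D"
    with assms(1) show "d \<in> ae_span P B D X0" by (intro ae_spanI[where s=0]) auto
  qed
  show "X0 \<in> ae_span P B D X0"
    using assms(3) lin_subspace_zero[OF assms(2)] by (intro ae_spanI[where s=1]) auto
qed

lemma ae_span_add:
  assumes "lin_subspace D" "W1 \<in> ae_span P B D X0" "W2 \<in> ae_span P B D X0"
    "d1 \<in> D" "ae_eq P W1 (\<lambda>\<omega>. d1 \<omega> + s1 * X0 \<omega>)" "d2 \<in> D" "ae_eq P W2 (\<lambda>\<omega>. d2 \<omega> + s2 * X0 \<omega>)"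
  shows "ae_eq P (\<lambda>\<omega>. W1 \<omega> + W2 \<omega>) (\<lambda>\<omega>. (d1 \<omega> + d2 \<omega>) + (s1 + s2) * X0 \<omega>)"
    and "(\<lambda>\<omega>. W1 \<omega> + W2 \<omega>) \<in> ae_span P B D X0"
proof -
  show e: "ae_eq P (\<lambda>\<omega>. W1 \<omega> + W2 \<omega>) (\<lambda>\<omega>. (d1 \<omega> + d2 \<omega>) + (s1 + s2) * X0 \<omega>)"
    using assms(5,7) unfolding ae_eq_def by eventually_elim (simp add: algebra_simps)
  show "(\<lambda>\<omega>. W1 \<omega> + W2 \<omega>) \<in> ae_span P B D X0"
    using assms by (intro ae_spanI[OF _ _ e] Linf_add lin_subspace_add) (auto simp: ae_span_def)
qed

lemma ae_span_scale:
  assumes "lin_subspace D" "W \<in> ae_span P B D X0" "d \<in> D" "ae_eq P W (\<lambda>\<omega>. d \<omega> + s * X0 \<omega>)"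
  shows "ae_eq P (\<lambda>\<omega>. c * W \<omega>) (\<lambda>\<omega>. c * d \<omega> + (c * s) * X0 \<omega>)"
    and "(\<lambda>\<omega>. c * W \<omega>) \<in> ae_span P B D X0"
proof -
  show e: "ae_eq P (\<lambda>\<omega>. c * W \<omega>) (\<lambda>\<omega>. c * d \<omega> + (c * s) * X0 \<omega>)"
    using assms(4) unfolding ae_eq_def by eventually_elim (simp add: algebra_simps)
  show "(\<lambda>\<omega>. c * W \<omega>) \<in> ae_span P B D X0"
    using assms by (intro ae_spanI[OF _ _ e] Linf_scale lin_subspace_scale) (auto simp: ae_span_def)
qed

lemma ae_span_lin_subspace:
  assumes "D \<subseteq> Linf P B" "lin_subspace D" "X0 \<in> Linf P B"
  shows "lin_subspace (ae_span P B D X0)"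
  unfolding lin_subspace_def
proof (intro conjI ballI allI)
  show "(\<lambda>\<omega>. 0) \<in> ae_span P B D X0"
    using ae_span_superset[OF assms] lin_subspace_zero[OF assms(2)] by blast
  show "(\<lambda>\<omega>. W1 \<omega> + W2 \<omega>) \<in> ae_span P B D X0"
    if "W1 \<in> ae_span P B D X0" "W2 \<in> ae_span P B D X0" for W1 W2
    using that by (elim ae_spanE) (rule ae_span_add(2)[OF assms(2) that])
  show "(\<lambda>\<omega>. c * W \<omega>) \<in> ae_span P B D X0" if "W \<in> ae_span P B D X0" for W c
    using that by (elim ae_spanE) (rule ae_span_scale(2)[OF assms(2) that])
qed

lemma ae_span_ae_closed: "ae_closed P (Linf P B) (ae_span P B D X0)"
  unfolding ae_closed_def
proof (intro ballI impI)
  fix W W' assume "W \<in> Linf P B" "W' \<in> ae_span P B D X0" "ae_eq P W W'"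
  then show "W \<in> ae_span P B D X0" by (elim ae_spanE) (blast intro: ae_spanI ae_eq_trans)
qed

text \<open>Since \<open>D\<close> is closed under a.s. equality, \<open>X0 \<notin> D\<close> means that \<open>X0\<close> is not a.s. in \<open>D\<close>.\<close>
lemma ae_span_repr_unique:
  assumes "lin_subspace D" "ae_closed P (Linf P B) D" "X0 \<in> Linf P B" "X0 \<notin> D"
    and d: "d1 \<in> D" "d2 \<in> D" and e: "ae_eq P (\<lambda>\<omega>. d1 \<omega> + s1 * X0 \<omega>) (\<lambda>\<omega>. d2 \<omega> + s2 * X0 \<omega>)"
  shows "s1 = s2" and "ae_eq P d1 d2"
proof -
  show "s1 = s2"
  proof (rule ccontr)
    assume ne: "s1 \<noteq> s2"
    define e where "e = (\<lambda>\<omega>. (1 / (s1 - s2)) * (\<lambda>\<omega>. d2 \<omega> + (-1) * d1 \<omega>) \<omega>)"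
    have "e \<in> D" unfolding e_def
      using d lin_subspace_scale[OF assms(1)] lin_subspace_add[OF assms(1)] by blast
    moreover have "ae_eq P X0 e" using e unfolding ae_eq_def e_def
      by eventually_elim (use ne in \<open>auto simp: field_simps\<close>)
    ultimately show False using assms(2-4) by (auto simp: ae_closed_def)
  qed
  then show "ae_eq P d1 d2"
    using e unfolding ae_eq_def by (auto elim: eventually_mono)
qed

lemma ae_span_operator_cong:
  assumes repr: "\<And>W d s. W \<in> ae_span P B D X0 \<Longrightarrow> d \<in> D \<Longrightarrow> ae_eq P W (\<lambda>\<omega>. d \<omega> + s * X0 \<omega>) \<Longrightarrow>
                   ae_eq P (T' W) (\<lambda>\<omega>. T d \<omega> + s * t \<omega>)"
    and W: "W1 \<in> ae_span P B D X0" "W2 \<in> ae_span P B D X0" "ae_eq P W1 W2"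
  shows "ae_eq P (T' W1) (T' W2)"
proof -
  obtain d s where d: "d \<in> D" and e1: "ae_eq P W1 (\<lambda>\<omega>. d \<omega> + s * X0 \<omega>)"
    using W(1) by (rule ae_spanE)
  have e2: "ae_eq P W2 (\<lambda>\<omega>. d \<omega> + s * X0 \<omega>)" using ae_eq_trans[OF ae_eq_sym[OF W(3)] e1] .
  show ?thesis using ae_eq_trans[OF repr[OF W(1) d e1] ae_eq_sym[OF repr[OF W(2) d e2]]] .
qed

lemma ae_span_operator_linear:
  assumes D: "lin_subspace D" and T: "linear_op P D T"
    and repr: "\<And>W d s. W \<in> ae_span P B D X0 \<Longrightarrow> d \<in> D \<Longrightarrow> ae_eq P W (\<lambda>\<omega>. d \<omega> + s * X0 \<omega>) \<Longrightarrow>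
                   ae_eq P (T' W) (\<lambda>\<omega>. T d \<omega> + s * t \<omega>)"
  shows "linear_op P (ae_span P B D X0) T'"
  unfolding linear_op_def
proof (intro conjI ballI allI)
  fix W1 W2 assume W: "W1 \<in> ae_span P B D X0" "W2 \<in> ae_span P B D X0"
  obtain d1 s1 d2 s2 where d: "d1 \<in> D" "d2 \<in> D"
    and e1: "ae_eq P W1 (\<lambda>\<omega>. d1 \<omega> + s1 * X0 \<omega>)" and e2: "ae_eq P W2 (\<lambda>\<omega>. d2 \<omega> + s2 * X0 \<omega>)"
    using W by (elim ae_spanE)
  note sum = ae_span_add[OF D W d(1) e1 d(2) e2]
  from repr[OF sum(2) lin_subspace_add[OF D d] sum(1)] repr[OF W(1) d(1) e1]
    repr[OF W(2) d(2) e2] linear_op_add[OF T d]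
  show "ae_eq P (T' (\<lambda>\<omega>. W1 \<omega> + W2 \<omega>)) (\<lambda>\<omega>. T' W1 \<omega> + T' W2 \<omega>)"
    unfolding ae_eq_def by eventually_elim (simp add: algebra_simps)
next
  fix W c assume W: "W \<in> ae_span P B D X0"
  obtain d s where d: "d \<in> D" and e: "ae_eq P W (\<lambda>\<omega>. d \<omega> + s * X0 \<omega>)"
    using W by (rule ae_spanE)
  note scaled = ae_span_scale[OF D W d e, of c]
  from repr[OF scaled(2) lin_subspace_scale[OF D d] scaled(1)] repr[OF W d e]
    linear_op_scale[OF T d, of c]
  show "ae_eq P (T' (\<lambda>\<omega>. c * W \<omega>)) (\<lambda>\<omega>. c * T' W \<omega>)"
    unfolding ae_eq_def by eventually_elim (simp add: algebra_simps)
qed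

text \<open>By uniqueness of the representation \<open>d + s X0\<close>, \<open>d + s X0 \<mapsto> T d + s t\<close> is well defined
  for any prescribed value \<open>t\<close>.\<close>
lemma linear_op_extend:
  assumes D: "D \<subseteq> Linf P B" "lin_subspace D" "ae_closed P (Linf P B) D"
    and T: "op_between P D (Linf P A) T" "linear_op P D T"
    and X0: "X0 \<in> Linf P B" "X0 \<notin> D" and t: "t \<in> Linf P A"
  obtains T' where "op_between P (ae_span P B D X0) (Linf P A) T'"
    "linear_op P (ae_span P B D X0) T'" "\<And>X. X \<in> D \<Longrightarrow> T' X = T X"
    "\<And>W d s. W \<in> ae_span P B D X0 \<Longrightarrow> d \<in> D \<Longrightarrow> ae_eq P W (\<lambda>\<omega>. d \<omega> + s * X0 \<omega>) \<Longrightarrow>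
               ae_eq P (T' W) (\<lambda>\<omega>. T d \<omega> + s * t \<omega>)"
proof -
  let ?D' = "ae_span P B D X0"
  note unique = ae_span_repr_unique[OF D(2,3) X0]
  define rep where "rep W = (SOME p. fst p \<in> D \<and> ae_eq P W (\<lambda>\<omega>. fst p \<omega> + snd p * X0 \<omega>))"
    for W
  define T' where "T' W = (if W \<in> D then T W else (\<lambda>\<omega>. T (fst (rep W)) \<omega> + snd (rep W) * t \<omega>))"
    for W
  have rep: "fst (rep W) \<in> D \<and> ae_eq P W (\<lambda>\<omega>. fst (rep W) \<omega> + snd (rep W) * X0 \<omega>)"
    if W: "W \<in> ?D'" for W
  proof -
    obtain d s where "d \<in> D" "ae_eq P W (\<lambda>\<omega>. d \<omega> + s * X0 \<omega>)" using W by (rule ae_spanE)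
    then have "\<exists>p. fst p \<in> D \<and> ae_eq P W (\<lambda>\<omega>. fst p \<omega> + snd p * X0 \<omega>)"
      by (intro exI[of _ "(d, s)"]) auto
    then show ?thesis unfolding rep_def by (rule someI_ex)
  qed
  have T'_repr: "ae_eq P (T' W) (\<lambda>\<omega>. T d \<omega> + s * t \<omega>)"
    if W: "W \<in> ?D'" and d: "d \<in> D" and e: "ae_eq P W (\<lambda>\<omega>. d \<omega> + s * X0 \<omega>)" for W d s
  proof (cases "W \<in> D")
    case True
    have e0: "ae_eq P (\<lambda>\<omega>. W \<omega> + 0 * X0 \<omega>) (\<lambda>\<omega>. d \<omega> + s * X0 \<omega>)" using e by simp
    have "s = 0" "ae_eq P W d" using unique[OF True d e0] by simp_all
    then show ?thesis using True op_between_cong[OF T(1) True d] by (simp add: T'_def)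
  next
    case False
    from rep[OF W] have "fst (rep W) \<in> D"
      and "ae_eq P (\<lambda>\<omega>. fst (rep W) \<omega> + snd (rep W) * X0 \<omega>) (\<lambda>\<omega>. d \<omega> + s * X0 \<omega>)"
      using e ae_eq_sym ae_eq_trans by blast+
    then have "snd (rep W) = s" "ae_eq P (T (fst (rep W))) (T d)"
      using unique d op_between_cong[OF T(1)] by blast+
    then show ?thesis using False unfolding T'_def ae_eq_def by (auto elim: eventually_mono)
  qed
  have "op_between P ?D' (Linf P A) T'"
    unfolding op_between_def
  proof (intro conjI ballI impI)
    show "T' W \<in> Linf P A" if "W \<in> ?D'" for W
      using rep[OF that] op_between_mem[OF T(1)] t unfolding T'_def by (auto intro!: Linf_add Linf_scale)
    show "ae_eq P (T' W1) (T' W2)" if "W1 \<in> ?D'" "W2 \<in> ?D'" "ae_eq P W1 W2" for W1 W2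
      using T'_repr that by (rule ae_span_operator_cong)
  qed
  moreover have "linear_op P ?D' T'" using D(2) T(2) T'_repr by (rule ae_span_operator_linear)
  moreover have "T' X = T X" if "X \<in> D" for X using that by (simp add: T'_def)
  ultimately show thesis using T'_repr by (rule that)
qed

subsection \<open>Admissible extensions\<close>

definition graph_on :: "'b set \<Rightarrow> ('b \<Rightarrow> 'c) \<Rightarrow> ('b \<times> 'c) set" where
  "graph_on D T = (\<lambda>X. (X, T X)) ` D"

lemma mem_graph_on_iff [simp]: "(X, y) \<in> graph_on D T \<longleftrightarrow> X \<in> D \<and> y = T X"
  by (auto simp: graph_on_def)

lemma graph_on_subset_iff: "graph_on D T \<subseteq> graph_on D' T' \<longleftrightarrow> D \<subseteq> D' \<and> (\<forall>X\<in>D. T' X = T X)"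
  by (auto simp: graph_on_def)

lemma chain_graph_on_Union:
  assumes "C \<in> chains {graph_on D T | D T. Q D T}"
  obtains DU TU where "\<Union>C = graph_on DU TU"
    "\<And>X1 X2. X1 \<in> DU \<Longrightarrow> X2 \<in> DU \<Longrightarrow> \<exists>D T. Q D T \<and> graph_on D T \<in> C \<and> X1 \<in> D \<and> X2 \<in> D"
proof -
  have C: "\<And>G. G \<in> C \<Longrightarrow> \<exists>D T. G = graph_on D T \<and> Q D T"
    and chain: "\<And>G G'. G \<in> C \<Longrightarrow> G' \<in> C \<Longrightarrow> G \<subseteq> G' \<or> G' \<subseteq> G"
    using assms by (auto simp: chains_def chain_subset_def)
  have common: "\<exists>D T. Q D T \<and> graph_on D T \<in> C \<and> (X1, y1) \<in> graph_on D T \<and> (X2, y2) \<in> graph_on D T"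
    if mem: "(X1, y1) \<in> \<Union>C" "(X2, y2) \<in> \<Union>C" for X1 y1 X2 y2
  proof -
    obtain G1 G2 where "G1 \<in> C" "G2 \<in> C" "(X1, y1) \<in> G1" "(X2, y2) \<in> G2"
      using mem by blast
    then obtain G where "G \<in> C" "(X1, y1) \<in> G" "(X2, y2) \<in> G"
      using chain by blast
    with C show ?thesis by blast
  qed
  have functional: "y = y'" if "(X, y) \<in> \<Union>C" "(X, y') \<in> \<Union>C" for X y y'
    using common[OF that] by auto
  define DU where "DU = fst ` \<Union>C"
  define TU where "TU X = (THE y. (X, y) \<in> \<Union>C)" for X
  have TU: "TU X = y" if "(X, y) \<in> \<Union>C" for X y
    unfolding TU_def using that functional by blast
  show ?thesis
  proof
    show "\<Union>C = graph_on DU TU"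
    proof (intro set_eqI iffI)
      fix p assume "p \<in> \<Union>C"
      then show "p \<in> graph_on DU TU" using TU by (cases p) (force simp: DU_def)
    next
      fix p assume "p \<in> graph_on DU TU"
      then obtain X y where "p = (X, TU X)" "(X, y) \<in> \<Union>C" by (force simp: graph_on_def DU_def)
      then show "p \<in> \<Union>C" using TU by simp
    qed
  next
    fix X1 X2 assume "X1 \<in> DU" "X2 \<in> DU"
    then obtain y1 y2 where "(X1, y1) \<in> \<Union>C" "(X2, y2) \<in> \<Union>C" by (force simp: DU_def)
    from common[OF this] show "\<exists>D T. Q D T \<and> graph_on D T \<in> C \<and> X1 \<in> D \<and> X2 \<in> D" by auto
  qed
qed

locale sandwich =
  fixes P A B :: "'a measure" and M m :: "('a \<Rightarrow> real) \<Rightarrow> 'a \<Rightarrow> real"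
  assumes prob: "prob_space P" and subalg: "subalgebra P A"
    and M_between: "op_between P (Linf_pos P B) (Linf_pos P A) M"
    and M_sublinear: "sublinear_op P (Linf_pos P B) M"
    and m_between: "op_between P (Linf_pos P B) (Linf_pos P A) m"
    and m_superlinear: "superlinear_op P (Linf_pos P B) m"
begin

lemma M_Linf: "Y \<in> Linf_pos P B \<Longrightarrow> M Y \<in> Linf P A"
  and m_Linf: "Y \<in> Linf_pos P B \<Longrightarrow> m Y \<in> Linf P A"
  using op_between_mem[OF M_between] op_between_mem[OF m_between] by (auto intro: Linf_pos_Linf)

lemma M_add: "Y1 \<in> Linf_pos P B \<Longrightarrow> Y2 \<in> Linf_pos P B \<Longrightarrow>
    AE \<omega> in P. M (\<lambda>\<omega>. Y1 \<omega> + Y2 \<omega>) \<omega> \<le> M Y1 \<omega> + M Y2 \<omega>"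
  and M_scale: "Y \<in> Linf_pos P B \<Longrightarrow> 0 \<le> c \<Longrightarrow> AE \<omega> in P. M (\<lambda>\<omega>. c * Y \<omega>) \<omega> = c * M Y \<omega>"
  using M_sublinear by (auto simp: sublinear_op_def ae_le_def ae_eq_def)

lemma m_add: "Z1 \<in> Linf_pos P B \<Longrightarrow> Z2 \<in> Linf_pos P B \<Longrightarrow>
    AE \<omega> in P. m Z1 \<omega> + m Z2 \<omega> \<le> m (\<lambda>\<omega>. Z1 \<omega> + Z2 \<omega>) \<omega>"
  and m_scale: "Z \<in> Linf_pos P B \<Longrightarrow> 0 \<le> c \<Longrightarrow> AE \<omega> in P. m (\<lambda>\<omega>. c * Z \<omega>) \<omega> = c * m Z \<omega>"
  using m_superlinear by (auto simp: superlinear_op_def ae_le_def ae_eq_def)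

definition dominated :: "('a \<Rightarrow> real) set \<Rightarrow> (('a \<Rightarrow> real) \<Rightarrow> 'a \<Rightarrow> real) \<Rightarrow> bool" where
  "dominated D T \<longleftrightarrow> (\<forall>X\<in>D. \<forall>Y\<in>Linf_pos P B. \<forall>Z\<in>Linf_pos P B.
     ae_le P (\<lambda>\<omega>. Z \<omega> + X \<omega>) Y \<longrightarrow> ae_le P (\<lambda>\<omega>. m Z \<omega> + T X \<omega>) (M Y))"

lemma dominatedD:
  "dominated D T \<Longrightarrow> X \<in> D \<Longrightarrow> Y \<in> Linf_pos P B \<Longrightarrow> Z \<in> Linf_pos P B \<Longrightarrow>
    AE \<omega> in P. Z \<omega> + X \<omega> \<le> Y \<omega> \<Longrightarrow> AE \<omega> in P. m Z \<omega> + T X \<omega> \<le> M Y \<omega>"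
  by (auto simp: dominated_def ae_le_def)

definition admissible :: "('a \<Rightarrow> real) set \<Rightarrow> (('a \<Rightarrow> real) \<Rightarrow> 'a \<Rightarrow> real) \<Rightarrow> bool" where
  "admissible D T \<longleftrightarrow> D \<subseteq> Linf P B \<and> lin_subspace D \<and> ae_closed P (Linf P B) D \<and>
     op_between P D (Linf P A) T \<and> linear_op P D T \<and> dominated D T"

text \<open>A value \<open>t\<close> for \<open>T X0\<close> keeps the extension dominated if it lies between these two
  families; they are obtained by dividing a constraint \<open>Z + d + s X0 \<le> Y\<close> by \<open>|s|\<close>.\<close>
definition upper_bounds :: "('a \<Rightarrow> real) set \<Rightarrow> (('a \<Rightarrow> real) \<Rightarrow> 'a \<Rightarrow> real) \<Rightarrow> ('a \<Rightarrow> real)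
    \<Rightarrow> ('a \<Rightarrow> real) set" where
  "upper_bounds D T X0 = {\<lambda>\<omega>. M Y \<omega> - m Z \<omega> - T d \<omega> | Y Z d.
     Y \<in> Linf_pos P B \<and> Z \<in> Linf_pos P B \<and> d \<in> D \<and> (AE \<omega> in P. Z \<omega> + d \<omega> + X0 \<omega> \<le> Y \<omega>)}"

definition lower_bounds :: "('a \<Rightarrow> real) set \<Rightarrow> (('a \<Rightarrow> real) \<Rightarrow> 'a \<Rightarrow> real) \<Rightarrow> ('a \<Rightarrow> real)
    \<Rightarrow> ('a \<Rightarrow> real) set" where
  "lower_bounds D T X0 = {\<lambda>\<omega>. m Z \<omega> + T d \<omega> - M Y \<omega> | Y Z d.
     Y \<in> Linf_pos P B \<and> Z \<in> Linf_pos P B \<and> d \<in> D \<and> (AE \<omega> in P. Z \<omega> + d \<omega> - X0 \<omega> \<le> Y \<omega>)}"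

lemma lower_bounds_le_upper_bounds:
  assumes "admissible D T" and "l \<in> lower_bounds D T X0" and "u \<in> upper_bounds D T X0"
  shows "AE \<omega> in P. l \<omega> \<le> u \<omega>"
proof -
  have D: "lin_subspace D" and T: "linear_op P D T" "dominated D T"
    using assms(1) by (auto simp: admissible_def)
  obtain Y1 Z1 d1 where 1: "Y1 \<in> Linf_pos P B" "Z1 \<in> Linf_pos P B" "d1 \<in> D"
    "AE \<omega> in P. Z1 \<omega> + d1 \<omega> - X0 \<omega> \<le> Y1 \<omega>" "l = (\<lambda>\<omega>. m Z1 \<omega> + T d1 \<omega> - M Y1 \<omega>)"
    using assms(2) unfolding lower_bounds_def by blast
  obtain Y2 Z2 d2 where 2: "Y2 \<in> Linf_pos P B" "Z2 \<in> Linf_pos P B" "d2 \<in> D"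
    "AE \<omega> in P. Z2 \<omega> + d2 \<omega> + X0 \<omega> \<le> Y2 \<omega>" "u = (\<lambda>\<omega>. M Y2 \<omega> - m Z2 \<omega> - T d2 \<omega>)"
    using assms(3) unfolding upper_bounds_def by blast
  have "AE \<omega> in P. (Z1 \<omega> + Z2 \<omega>) + (d1 \<omega> + d2 \<omega>) \<le> Y1 \<omega> + Y2 \<omega>"
    using 1(4) 2(4) by eventually_elim auto
  then have "AE \<omega> in P. m (\<lambda>\<omega>. Z1 \<omega> + Z2 \<omega>) \<omega> + T (\<lambda>\<omega>. d1 \<omega> + d2 \<omega>) \<omega>
      \<le> M (\<lambda>\<omega>. Y1 \<omega> + Y2 \<omega>) \<omega>"
    using 1 2 by (intro dominatedD[OF T(2)] lin_subspace_add[OF D] Linf_pos_add) auto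
  with m_add[OF 1(2) 2(2)] M_add[OF 1(1) 2(1)] linear_op_add[OF T(1) 1(3) 2(3)]
  show ?thesis unfolding 1(5) 2(5) by eventually_elim auto
qed

lemma value_between_bounds_exists:
  assumes adm: "admissible D T" and X0: "X0 \<in> Linf P B"
  obtains t where "t \<in> Linf P A"
    "\<And>l. l \<in> lower_bounds D T X0 \<Longrightarrow> AE \<omega> in P. l \<omega> \<le> t \<omega>"
    "\<And>u. u \<in> upper_bounds D T X0 \<Longrightarrow> AE \<omega> in P. t \<omega> \<le> u \<omega>"
proof -
  have D0: "(\<lambda>\<omega>. 0) \<in> D" and T: "op_between P D (Linf P A) T"
    using adm by (auto simp: admissible_def intro: lin_subspace_zero)
  have bounds_Linf: "f \<in> Linf P A" if "f \<in> upper_bounds D T X0 \<union> lower_bounds D T X0" for f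
    using that M_Linf m_Linf op_between_mem[OF T]
    by (auto simp: upper_bounds_def lower_bounds_def intro!: Linf_diff Linf_add)
  define u0 where "u0 = (\<lambda>\<omega>. M (\<lambda>\<omega>. max 0 (X0 \<omega>)) \<omega> - m (\<lambda>\<omega>. 0) \<omega> - T (\<lambda>\<omega>. 0) \<omega>)"
  define l0 where "l0 = (\<lambda>\<omega>. m (\<lambda>\<omega>. 0) \<omega> + T (\<lambda>\<omega>. 0) \<omega> - M (\<lambda>\<omega>. max 0 (- X0 \<omega>)) \<omega>)"
  have u0: "u0 \<in> upper_bounds D T X0"
    unfolding upper_bounds_def u0_def using X0 D0
    by (intro CollectI exI[of _ "\<lambda>\<omega>. max 0 (X0 \<omega>)"] exI[of _ "\<lambda>\<omega>. 0"]) auto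
  have l0: "l0 \<in> lower_bounds D T X0"
    unfolding lower_bounds_def l0_def using X0 D0 Linf_scale[OF X0, of "-1"]
    by (intro CollectI exI[of _ "\<lambda>\<omega>. max 0 (- X0 \<omega>)"] exI[of _ "\<lambda>\<omega>. 0"]) auto
  obtain hi where hi: "AE \<omega> in P. u0 \<omega> \<le> hi"
    using Linf_ae_bounds[OF bounds_Linf] u0 by (metis UnI1)
  obtain lo where lo: "AE \<omega> in P. lo \<le> l0 \<omega>"
    using Linf_ae_bounds[OF bounds_Linf] l0 by (metis UnI2)
  have "lower_bounds D T X0 \<subseteq> borel_measurable A"
    using bounds_Linf by (auto simp: Linf_def)
  moreover have "AE \<omega> in P. l \<omega> \<le> hi" if "l \<in> lower_bounds D T X0" for l
    using lower_bounds_le_upper_bounds[OF adm that u0] hi by eventually_elim auto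
  ultimately obtain t where "t \<in> Linf P A" "\<And>l. l \<in> lower_bounds D T X0 \<Longrightarrow> AE \<omega> in P. l \<omega> \<le> t \<omega>"
    and least: "\<And>h. (\<And>l. l \<in> lower_bounds D T X0 \<Longrightarrow> AE \<omega> in P. l \<omega> \<le> h \<omega>) \<Longrightarrow>
                     AE \<omega> in P. t \<omega> \<le> h \<omega>"
    using ae_least_upper_bound_exists[OF prob subalg _ _ l0 lo] by blast
  moreover have "AE \<omega> in P. t \<omega> \<le> u \<omega>" if "u \<in> upper_bounds D T X0" for u
    using least lower_bounds_le_upper_bounds[OF adm _ that] by blast
  ultimately show thesis using that by blast
qed

lemma bound_scale:
  assumes "linear_op P D T" "d \<in> D" "Y \<in> Linf_pos P B" "Z \<in> Linf_pos P B" "0 \<le> c"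
  shows "AE \<omega> in P. M (\<lambda>\<omega>. c * Y \<omega>) \<omega> - m (\<lambda>\<omega>. c * Z \<omega>) \<omega> - T (\<lambda>\<omega>. c * d \<omega>) \<omega>
    = c * (M Y \<omega> - m Z \<omega> - T d \<omega>)"
  using M_scale[OF assms(3,5)] m_scale[OF assms(4,5)] linear_op_scale[OF assms(1,2), of c]
  by eventually_elim (simp add: algebra_simps)

lemma upper_bound_of_constraint:
  assumes adm: "admissible D T" and d: "d \<in> D" and Y: "Y \<in> Linf_pos P B" and Z: "Z \<in> Linf_pos P B"
    and s: "0 < s" and le: "AE \<omega> in P. Z \<omega> + d \<omega> + s * X0 \<omega> \<le> Y \<omega>"
  obtains u where "u \<in> upper_bounds D T X0" "AE \<omega> in P. s * u \<omega> = M Y \<omega> - m Z \<omega> - T d \<omega>"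
proof -
  have D: "lin_subspace D" and T: "linear_op P D T" using adm by (auto simp: admissible_def)
  define c where "c = 1 / s"
  have c: "0 \<le> c" "c * s = 1" using s by (auto simp: c_def)
  have "AE \<omega> in P. c * Z \<omega> + c * d \<omega> + X0 \<omega> \<le> c * Y \<omega>"
    using le
  proof eventually_elim
    case (elim \<omega>)
    then have "c * (Z \<omega> + d \<omega> + s * X0 \<omega>) \<le> c * Y \<omega>" using c(1) by (rule mult_left_mono)
    then show ?case using c(2) by (simp add: distrib_left mult.assoc[symmetric])
  qed
  then have "(\<lambda>\<omega>. M (\<lambda>\<omega>. c * Y \<omega>) \<omega> - m (\<lambda>\<omega>. c * Z \<omega>) \<omega> - T (\<lambda>\<omega>. c * d \<omega>) \<omega>)
      \<in> upper_bounds D T X0"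
    unfolding upper_bounds_def using Y Z d c(1) lin_subspace_scale[OF D] by blast
  moreover from bound_scale[OF T d Y Z c(1)]
  have "AE \<omega> in P. s * (M (\<lambda>\<omega>. c * Y \<omega>) \<omega> - m (\<lambda>\<omega>. c * Z \<omega>) \<omega> - T (\<lambda>\<omega>. c * d \<omega>) \<omega>)
      = M Y \<omega> - m Z \<omega> - T d \<omega>"
  proof eventually_elim
    case (elim \<omega>)
    then have "s * (M (\<lambda>\<omega>. c * Y \<omega>) \<omega> - m (\<lambda>\<omega>. c * Z \<omega>) \<omega> - T (\<lambda>\<omega>. c * d \<omega>) \<omega>)
        = (c * s) * (M Y \<omega> - m Z \<omega> - T d \<omega>)" by simp
    then show ?case using c(2) by simp
  qed
  ultimately show thesis by (rule that)
qed

lemma lower_bound_of_constraint: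
  assumes adm: "admissible D T" and d: "d \<in> D" and Y: "Y \<in> Linf_pos P B" and Z: "Z \<in> Linf_pos P B"
    and s: "s < 0" and le: "AE \<omega> in P. Z \<omega> + d \<omega> + s * X0 \<omega> \<le> Y \<omega>"
  obtains l where "l \<in> lower_bounds D T X0" "AE \<omega> in P. - s * l \<omega> = m Z \<omega> + T d \<omega> - M Y \<omega>"
proof -
  have D: "lin_subspace D" and T: "linear_op P D T" using adm by (auto simp: admissible_def)
  define c where "c = - 1 / s"
  have c: "0 \<le> c" "c * s = - 1" using s by (auto simp: c_def)
  have "AE \<omega> in P. c * Z \<omega> + c * d \<omega> - X0 \<omega> \<le> c * Y \<omega>"
    using le
  proof eventually_elim
    case (elim \<omega>)
    then have "c * (Z \<omega> + d \<omega> + s * X0 \<omega>) \<le> c * Y \<omega>" using c(1) by (rule mult_left_mono)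
    then show ?case using c(2) by (simp add: distrib_left mult.assoc[symmetric])
  qed
  then have "(\<lambda>\<omega>. m (\<lambda>\<omega>. c * Z \<omega>) \<omega> + T (\<lambda>\<omega>. c * d \<omega>) \<omega> - M (\<lambda>\<omega>. c * Y \<omega>) \<omega>)
      \<in> lower_bounds D T X0"
    unfolding lower_bounds_def using Y Z d c(1) lin_subspace_scale[OF D] by blast
  moreover from bound_scale[OF T d Y Z c(1)]
  have "AE \<omega> in P. - s * (m (\<lambda>\<omega>. c * Z \<omega>) \<omega> + T (\<lambda>\<omega>. c * d \<omega>) \<omega> - M (\<lambda>\<omega>. c * Y \<omega>) \<omega>)
      = m Z \<omega> + T d \<omega> - M Y \<omega>"
  proof eventually_elim
    case (elim \<omega>)
    have "- s * (m (\<lambda>\<omega>. c * Z \<omega>) \<omega> + T (\<lambda>\<omega>. c * d \<omega>) \<omega> - M (\<lambda>\<omega>. c * Y \<omega>) \<omega>)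
        = s * (M (\<lambda>\<omega>. c * Y \<omega>) \<omega> - m (\<lambda>\<omega>. c * Z \<omega>) \<omega> - T (\<lambda>\<omega>. c * d \<omega>) \<omega>)"
      by (simp add: algebra_simps)
    also have "\<dots> = (c * s) * (M Y \<omega> - m Z \<omega> - T d \<omega>)" using elim by simp
    finally show ?case using c(2) by simp
  qed
  ultimately show thesis by (rule that)
qed

lemma dominated_with_value_between_bounds:
  assumes adm: "admissible D T"
    and lower: "\<And>l. l \<in> lower_bounds D T X0 \<Longrightarrow> AE \<omega> in P. l \<omega> \<le> t \<omega>"
    and upper: "\<And>u. u \<in> upper_bounds D T X0 \<Longrightarrow> AE \<omega> in P. t \<omega> \<le> u \<omega>"
    and d: "d \<in> D" and Y: "Y \<in> Linf_pos P B" and Z: "Z \<in> Linf_pos P B"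
    and le: "AE \<omega> in P. Z \<omega> + d \<omega> + s * X0 \<omega> \<le> Y \<omega>"
  shows "AE \<omega> in P. m Z \<omega> + T d \<omega> + s * t \<omega> \<le> M Y \<omega>"
proof (cases s "0::real" rule: linorder_cases)
  case equal
  with le have "AE \<omega> in P. Z \<omega> + d \<omega> \<le> Y \<omega>" by simp
  with adm d Y Z have "AE \<omega> in P. m Z \<omega> + T d \<omega> \<le> M Y \<omega>"
    by (intro dominatedD) (auto simp: admissible_def)
  with equal show ?thesis by simp
next
  case greater
  obtain u where u: "u \<in> upper_bounds D T X0" "AE \<omega> in P. s * u \<omega> = M Y \<omega> - m Z \<omega> - T d \<omega>"
    by (rule upper_bound_of_constraint[OF adm d Y Z greater le])
  from upper[OF u(1)] u(2) show ?thesis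
  proof eventually_elim
    case (elim \<omega>)
    then have "s * t \<omega> \<le> s * u \<omega>" using greater by (intro mult_left_mono) auto
    with elim show ?case by simp
  qed
next
  case less
  obtain l where l: "l \<in> lower_bounds D T X0" "AE \<omega> in P. - s * l \<omega> = m Z \<omega> + T d \<omega> - M Y \<omega>"
    by (rule lower_bound_of_constraint[OF adm d Y Z less le])
  from lower[OF l(1)] l(2) show ?thesis
  proof eventually_elim
    case (elim \<omega>)
    then have "- s * l \<omega> \<le> - s * t \<omega>" using less by (intro mult_left_mono) auto
    with elim show ?case by simp
  qed
qed

lemma admissible_extend_one:
  assumes adm: "admissible D T" and X0: "X0 \<in> Linf P B" "X0 \<notin> D"
  obtains D' T' where "admissible D' T'" "D \<subseteq> D'" "X0 \<in> D'" "\<And>X. X \<in> D \<Longrightarrow> T' X = T X"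
proof -
  have D: "D \<subseteq> Linf P B" "lin_subspace D" "ae_closed P (Linf P B) D"
    and T: "op_between P D (Linf P A) T" "linear_op P D T"
    using adm by (auto simp: admissible_def)
  obtain t where t: "t \<in> Linf P A"
    and lower: "\<And>l. l \<in> lower_bounds D T X0 \<Longrightarrow> AE \<omega> in P. l \<omega> \<le> t \<omega>"
    and upper: "\<And>u. u \<in> upper_bounds D T X0 \<Longrightarrow> AE \<omega> in P. t \<omega> \<le> u \<omega>"
    by (rule value_between_bounds_exists[OF adm X0(1)]) (rule that)
  obtain T' where T': "op_between P (ae_span P B D X0) (Linf P A) T'"
    "linear_op P (ae_span P B D X0) T'" "\<And>X. X \<in> D \<Longrightarrow> T' X = T X"
    and repr: "\<And>W d s. W \<in> ae_span P B D X0 \<Longrightarrow> d \<in> D \<Longrightarrow> ae_eq P W (\<lambda>\<omega>. d \<omega> + s * X0 \<omega>) \<Longrightarrow>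
                 ae_eq P (T' W) (\<lambda>\<omega>. T d \<omega> + s * t \<omega>)"
    by (rule linear_op_extend[OF D T X0 t]) (rule that)
  have "dominated (ae_span P B D X0) T'"
    unfolding dominated_def ae_le_def
  proof (intro ballI impI)
    fix X Y Z assume X: "X \<in> ae_span P B D X0" and Y: "Y \<in> Linf_pos P B" and Z: "Z \<in> Linf_pos P B"
      and le: "AE \<omega> in P. Z \<omega> + X \<omega> \<le> Y \<omega>"
    obtain d s where d: "d \<in> D" and e: "ae_eq P X (\<lambda>\<omega>. d \<omega> + s * X0 \<omega>)"
      using X by (rule ae_spanE)
    have "AE \<omega> in P. Z \<omega> + d \<omega> + s * X0 \<omega> \<le> Y \<omega>"
      using le e unfolding ae_eq_def by eventually_elim (simp add: add.assoc)
    with lower upper d Y Z have "AE \<omega> in P. m Z \<omega> + T d \<omega> + s * t \<omega> \<le> M Y \<omega>"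
      by (intro dominated_with_value_between_bounds[OF adm])
    with repr[OF X d e] show "AE \<omega> in P. m Z \<omega> + T' X \<omega> \<le> M Y \<omega>"
      unfolding ae_eq_def by eventually_elim (simp add: add.assoc)
  qed
  then have "admissible (ae_span P B D X0) T'"
    using T' ae_span_Linf[of P B D X0] ae_span_lin_subspace[OF D(1,2) X0(1)]
      ae_span_ae_closed[of P B D X0]
    by (simp add: admissible_def)
  from that[OF this ae_span_superset[OF D(1,2) X0(1)] T'(3)] show thesis .
qed

lemma admissible_directed_Union:
  assumes "DU \<noteq> {}"
    and directed: "\<And>X1 X2. X1 \<in> DU \<Longrightarrow> X2 \<in> DU \<Longrightarrow>
      \<exists>D T. admissible D T \<and> D \<subseteq> DU \<and> (\<forall>X\<in>D. TU X = T X) \<and> X1 \<in> D \<and> X2 \<in> D"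
  shows "admissible DU TU"
proof -
  have "DU \<subseteq> Linf P B"
  proof
    fix X assume "X \<in> DU"
    with directed[OF this this] show "X \<in> Linf P B" unfolding admissible_def by blast
  qed
  moreover have "lin_subspace DU"
    unfolding lin_subspace_def
  proof (intro conjI ballI allI)
    obtain X where "X \<in> DU" using assms(1) by blast
    from directed[OF this this] show "(\<lambda>\<omega>. 0) \<in> DU"
      unfolding admissible_def by (blast dest: lin_subspace_zero)
    show "(\<lambda>\<omega>. X1 \<omega> + X2 \<omega>) \<in> DU" if "X1 \<in> DU" "X2 \<in> DU" for X1 X2
      using directed[OF that] unfolding admissible_def by (blast dest: lin_subspace_add)
    show "(\<lambda>\<omega>. c * X \<omega>) \<in> DU" if "X \<in> DU" for X c
      using directed[OF that that] unfolding admissible_def by (blast dest: lin_subspace_scale)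
  qed
  moreover have "ae_closed P (Linf P B) DU"
    unfolding ae_closed_def
  proof (intro ballI impI)
    fix W d assume "W \<in> Linf P B" "d \<in> DU" "ae_eq P W d"
    with directed[OF \<open>d \<in> DU\<close> \<open>d \<in> DU\<close>] show "W \<in> DU"
      unfolding admissible_def ae_closed_def by blast
  qed
  moreover have "op_between P DU (Linf P A) TU"
    unfolding op_between_def
  proof (intro conjI ballI impI)
    show "TU X \<in> Linf P A" if "X \<in> DU" for X
      using directed[OF that that] unfolding admissible_def by (auto dest: op_between_mem)
    show "ae_eq P (TU X1) (TU X2)" if "X1 \<in> DU" "X2 \<in> DU" "ae_eq P X1 X2" for X1 X2
      using directed[OF that(1,2)] that(3) unfolding admissible_def by (auto dest: op_between_cong)
  qed
  moreover have "linear_op P DU TU"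
    unfolding linear_op_def
  proof (intro conjI ballI allI)
    show "ae_eq P (TU (\<lambda>\<omega>. X1 \<omega> + X2 \<omega>)) (\<lambda>\<omega>. TU X1 \<omega> + TU X2 \<omega>)"
      if "X1 \<in> DU" "X2 \<in> DU" for X1 X2
      using directed[OF that] unfolding admissible_def by (auto simp: linear_op_def lin_subspace_def)
    show "ae_eq P (TU (\<lambda>\<omega>. c * X \<omega>)) (\<lambda>\<omega>. c * TU X \<omega>)" if "X \<in> DU" for X c
      using directed[OF that that] unfolding admissible_def by (auto simp: linear_op_def lin_subspace_def)
  qed
  moreover have "dominated DU TU"
    unfolding dominated_def
  proof (intro ballI impI)
    fix X Y Z assume "X \<in> DU" "Y \<in> Linf_pos P B" "Z \<in> Linf_pos P B" "ae_le P (\<lambda>\<omega>. Z \<omega> + X \<omega>) Y"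
    with directed[OF \<open>X \<in> DU\<close> \<open>X \<in> DU\<close>] show "ae_le P (\<lambda>\<omega>. m Z \<omega> + TU X \<omega>) (M Y)"
      unfolding admissible_def dominated_def by auto
  qed
  ultimately show ?thesis by (simp add: admissible_def)
qed

lemma admissible_chain_Union:
  assumes C: "C \<in> chains {graph_on D T | D T. admissible D T \<and> Q D T}" and "C \<noteq> {}"
  obtains DU TU where "\<Union>C = graph_on DU TU" "admissible DU TU"
proof -
  obtain DU TU where U: "\<Union>C = graph_on DU TU" and directed:
    "\<And>X1 X2. X1 \<in> DU \<Longrightarrow> X2 \<in> DU \<Longrightarrow>
       \<exists>D T. (admissible D T \<and> Q D T) \<and> graph_on D T \<in> C \<and> X1 \<in> D \<and> X2 \<in> D"
    by (rule chain_graph_on_Union[OF C]) (rule that)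
  have "admissible DU TU"
  proof (rule admissible_directed_Union)
    from \<open>C \<noteq> {}\<close> obtain G where "G \<in> C" by blast
    with C obtain D T where "admissible D T" "graph_on D T \<in> C" unfolding chains_def by blast
    moreover from this have "(\<lambda>\<omega>. 0) \<in> D" by (auto simp: admissible_def intro: lin_subspace_zero)
    ultimately have "((\<lambda>\<omega>. 0), T (\<lambda>\<omega>. 0)) \<in> graph_on DU TU"
      unfolding U[symmetric] by (metis UnionI mem_graph_on_iff)
    then show "DU \<noteq> {}" by auto
    show "\<exists>D T. admissible D T \<and> D \<subseteq> DU \<and> (\<forall>X\<in>D. TU X = T X) \<and> X1 \<in> D \<and> X2 \<in> D"
      if X: "X1 \<in> DU" "X2 \<in> DU" for X1 X2
    proof -
      obtain D T where "admissible D T" "graph_on D T \<in> C" "X1 \<in> D" "X2 \<in> D"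
        using directed[OF X] by blast
      moreover from this U have "graph_on D T \<subseteq> graph_on DU TU" by blast
      ultimately show ?thesis unfolding graph_on_subset_iff by blast
    qed
  qed
  with U show thesis by (rule that)
qed

text \<open>Zorn's lemma on graphs of admissible extensions, with \<open>admissible_extend_one\<close> ruling out
  maximal elements on a proper subspace.\<close>
lemma admissible_extend_to_Linf:
  assumes "admissible D T"
  obtains T' where "admissible (Linf P B) T'" "\<And>X. X \<in> D \<Longrightarrow> T' X = T X"
proof -
  define \<F> where "\<F> = {graph_on D' T' | D' T'. admissible D' T' \<and> graph_on D T \<subseteq> graph_on D' T'}"
  have "\<exists>U\<in>\<F>. \<forall>G\<in>C. G \<subseteq> U" if C: "C \<in> chains \<F>" for C
  proof (cases "C = {}")
    case True
    then show ?thesis using assms by (auto simp: \<F>_def)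
  next
    case False
    obtain DU TU where U: "\<Union>C = graph_on DU TU" "admissible DU TU"
      by (rule admissible_chain_Union[OF C[unfolded \<F>_def] False])
    obtain G where "G \<in> C" using False by blast
    then have "graph_on D T \<subseteq> \<Union>C" using C by (auto simp: \<F>_def chains_def)
    with U have "\<Union>C \<in> \<F>" unfolding \<F>_def by auto
    then show ?thesis by blast
  qed
  then obtain G where "G \<in> \<F>" and maximal: "\<forall>G'\<in>\<F>. G \<subseteq> G' \<longrightarrow> G' = G"
    using Zorn_Lemma2[of \<F>] by blast
  then obtain D' T' where G: "G = graph_on D' T'" and adm: "admissible D' T'"
    and ext: "graph_on D T \<subseteq> graph_on D' T'"
    by (auto simp: \<F>_def)
  have "D' = Linf P B"
  proof (rule ccontr)
    assume "D' \<noteq> Linf P B"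
    then obtain X0 where X0: "X0 \<in> Linf P B" "X0 \<notin> D'" using adm by (auto simp: admissible_def)
    obtain D'' T'' where "admissible D'' T''" "D' \<subseteq> D''" "X0 \<in> D''" "\<And>X. X \<in> D' \<Longrightarrow> T'' X = T' X"
      by (rule admissible_extend_one[OF adm X0]) (rule that)
    then have "graph_on D' T' \<subseteq> graph_on D'' T''" by (simp add: graph_on_subset_iff)
    moreover from this have "graph_on D'' T'' \<in> \<F>"
      using ext \<open>admissible D'' T''\<close> unfolding \<F>_def by blast
    ultimately have "graph_on D'' T'' = graph_on D' T'" using maximal G by blast
    then have "X0 \<in> D'" using \<open>X0 \<in> D''\<close> by (metis mem_graph_on_iff)
    with X0 show False by simp
  qed
  with adm ext show thesis using that by (auto simp: graph_on_subset_iff)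
qed

text \<open>The a.s.-closure of \<open>L\<close> is \<open>ae_span P B L 0\<close>, on which \<open>x\<close> acts through any a.s.-equal
  representative in \<open>L\<close>.\<close>
lemma admissible_ae_closure:
  assumes L: "lin_subspace L" "L \<subseteq> Linf P B"
    and x: "op_between P L (Linf P A) x" "linear_op P L x" "dominated L x"
  obtains D T where "admissible D T" "L \<subseteq> D" "\<And>X. X \<in> L \<Longrightarrow> ae_eq P (T X) (x X)"
proof -
  define D where "D = ae_span P B L (\<lambda>\<omega>. 0)"
  define T where "T W = x (SOME l. l \<in> L \<and> ae_eq P W l)" for W
  have D_cases: "\<exists>l. l \<in> L \<and> ae_eq P W l" if "W \<in> D" for W
    using that unfolding D_def by (elim ae_spanE) auto
  have T_repr: "ae_eq P (T W) (x l)" if W: "W \<in> D" and l: "l \<in> L" "ae_eq P W l" for W l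
  proof -
    define l' where "l' = (SOME l. l \<in> L \<and> ae_eq P W l)"
    have l': "l' \<in> L" "ae_eq P W l'" unfolding l'_def using someI_ex[OF D_cases[OF W]] by auto
    then have "ae_eq P l' l" using ae_eq_trans[OF ae_eq_sym[OF l'(2)] l(2)] by blast
    then show ?thesis using op_between_cong[OF x(1) l'(1) l(1)] by (simp add: T_def l'_def)
  qed
  have repr: "ae_eq P (T W) (\<lambda>\<omega>. x l \<omega> + s * 0)"
    if "W \<in> D" "l \<in> L" "ae_eq P W (\<lambda>\<omega>. l \<omega> + s * 0)" for W l s
    using T_repr that by simp
  have L_D: "L \<subseteq> D" unfolding D_def by (rule ae_span_superset[OF L(2,1) Linf_const])
  have "linear_op P D T"
    unfolding D_def using L(1) x(2) repr[unfolded D_def] by (rule ae_span_operator_linear)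
  moreover have "op_between P D (Linf P A) T"
    unfolding op_between_def
  proof (intro conjI ballI impI)
    show "T W \<in> Linf P A" if "W \<in> D" for W
      using someI_ex[OF D_cases[OF that]] op_between_mem[OF x(1)] by (simp add: T_def)
    show "ae_eq P (T W1) (T W2)" if "W1 \<in> D" "W2 \<in> D" "ae_eq P W1 W2" for W1 W2
      using repr[unfolded D_def] that[unfolded D_def] by (rule ae_span_operator_cong)
  qed
  moreover have "dominated D T"
    unfolding dominated_def ae_le_def
  proof (intro ballI impI)
    fix X Y Z assume X: "X \<in> D" and Y: "Y \<in> Linf_pos P B" and Z: "Z \<in> Linf_pos P B"
      and le: "AE \<omega> in P. Z \<omega> + X \<omega> \<le> Y \<omega>"
    obtain l where l: "l \<in> L" "ae_eq P X l" using D_cases[OF X] by blast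
    from le l(2) have "AE \<omega> in P. Z \<omega> + l \<omega> \<le> Y \<omega>"
      unfolding ae_eq_def by eventually_elim simp
    from dominatedD[OF x(3) l(1) Y Z this] T_repr[OF X l]
    show "AE \<omega> in P. m Z \<omega> + T X \<omega> \<le> M Y \<omega>"
      unfolding ae_eq_def by eventually_elim simp
  qed
  ultimately have adm: "admissible D T"
    using ae_span_lin_subspace[OF L(2,1) Linf_const] ae_span_Linf[of P B L] ae_span_ae_closed[of P B L]
    by (simp add: admissible_def D_def)
  have "ae_eq P (T X) (x X)" if "X \<in> L" for X
    using T_repr[of X X] that L_D by auto
  with adm L_D show thesis by (rule that)
qed

lemma M_zero: "AE \<omega> in P. M (\<lambda>\<omega>. 0) \<omega> = 0"
  and m_zero: "AE \<omega> in P. m (\<lambda>\<omega>. 0) \<omega> = 0"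
  using M_scale[OF Linf_pos_zero, of 0] m_scale[OF Linf_pos_zero, of 0] by simp_all

lemma admissible_Linf_bounds:
  assumes "admissible (Linf P B) T" and X: "X \<in> Linf_pos P B"
  shows "AE \<omega> in P. m X \<omega> \<le> T X \<omega>" and "AE \<omega> in P. T X \<omega> \<le> M X \<omega>"
proof -
  have T: "linear_op P (Linf P B) T" "dominated (Linf P B) T"
    using assms(1) by (auto simp: admissible_def)
  have XB: "X \<in> Linf P B" using X by (rule Linf_pos_Linf)
  have "AE \<omega> in P. m X \<omega> + T (\<lambda>\<omega>. (-1) * X \<omega>) \<omega> \<le> M (\<lambda>\<omega>. 0) \<omega>"
    using X XB by (intro dominatedD[OF T(2)] Linf_scale) auto
  with M_zero linear_op_scale[OF T(1) XB, of "-1"]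
  show "AE \<omega> in P. m X \<omega> \<le> T X \<omega>" by eventually_elim simp
  have "AE \<omega> in P. m (\<lambda>\<omega>. 0) \<omega> + T X \<omega> \<le> M X \<omega>"
    using X XB by (intro dominatedD[OF T(2)]) auto
  with m_zero show "AE \<omega> in P. T X \<omega> \<le> M X \<omega>" by eventually_elim simp
qed

text \<open>Monotonicity and continuity from above both come from the bounds applied to differences:
  \<open>0 \<le> m (X - Y) \<le> T X - T Y \<le> M (X - Y)\<close>.\<close>
lemma admissible_Linf_diff_bounds:
  assumes adm: "admissible (Linf P B) T" and X: "X \<in> Linf P B" and Y: "Y \<in> Linf P B"
    and le: "AE \<omega> in P. Y \<omega> \<le> X \<omega>"
  shows "AE \<omega> in P. 0 \<le> T X \<omega> - T Y \<omega> \<and> T X \<omega> - T Y \<omega> \<le> M (\<lambda>\<omega>. X \<omega> - Y \<omega>) \<omega>"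
proof -
  have T: "linear_op P (Linf P B) T" "lin_subspace (Linf P B)"
    using adm by (auto simp: admissible_def lin_subspace_def)
  have W: "(\<lambda>\<omega>. X \<omega> - Y \<omega>) \<in> Linf_pos P B"
    using X Y le by (intro Linf_posI Linf_diff) (auto elim: eventually_mono)
  have "AE \<omega> in P. 0 \<le> m (\<lambda>\<omega>. X \<omega> - Y \<omega>) \<omega>"
    using op_between_mem[OF m_between W] by (rule Linf_pos_nonneg)
  with admissible_Linf_bounds[OF adm W] linear_op_diff[OF T X Y]
  show ?thesis by eventually_elim auto
qed

lemma admissible_Linf_monotone:
  assumes "admissible (Linf P B) T"
  shows "monotone_op P (Linf P B) T"
  unfolding monotone_op_def ae_le_def
proof (intro ballI impI)
  fix X Y assume "X \<in> Linf P B" "Y \<in> Linf P B" "AE \<omega> in P. Y \<omega> \<le> X \<omega>"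
  from admissible_Linf_diff_bounds[OF assms this] show "AE \<omega> in P. T Y \<omega> \<le> T X \<omega>"
    by eventually_elim simp
qed

lemma admissible_Linf_cont_above:
  assumes reg: "regular_op P (Linf_pos P B) M" and adm: "admissible (Linf P B) T"
  shows "cont_above_op P (Linf P B) T"
  unfolding cont_above_op_def
proof (intro allI impI)
  fix Xs :: "nat \<Rightarrow> 'a \<Rightarrow> real" and X
  assume Xs: "\<forall>n. Xs n \<in> Linf P B" and X: "X \<in> Linf P B"
    and conv: "AE \<omega> in P. decseq (\<lambda>n. Xs n \<omega>) \<and> (\<lambda>n. Xs n \<omega>) \<longlonglongrightarrow> X \<omega>"
  define W where "W n = (\<lambda>\<omega>. Xs n \<omega> - X \<omega>)" for n
  have X_le: "AE \<omega> in P. X \<omega> \<le> Xs n \<omega>" for n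
    using conv by eventually_elim (auto intro: decseq_ge)
  have "\<forall>n. W n \<in> Linf_pos P B"
  proof
    fix n
    from X_le[of n] have "AE \<omega> in P. 0 \<le> W n \<omega>" unfolding W_def by eventually_elim simp
    with Xs X show "W n \<in> Linf_pos P B" unfolding W_def by (blast intro: Linf_posI Linf_diff)
  qed
  moreover have "AE \<omega> in P. decseq (\<lambda>n. W n \<omega>) \<and> (\<lambda>n. W n \<omega>) \<longlonglongrightarrow> 0"
    using conv
  proof eventually_elim
    case (elim \<omega>)
    then show ?case unfolding W_def decseq_def by (auto intro: LIM_zero)
  qed
  ultimately have M_W: "AE \<omega> in P. (\<lambda>n. M (W n) \<omega>) \<longlonglongrightarrow> 0"
    using reg[unfolded regular_op_def, rule_format, of W] by blast
  have "\<forall>n. AE \<omega> in P. 0 \<le> T (Xs n) \<omega> - T X \<omega> \<and> T (Xs n) \<omega> - T X \<omega> \<le> M (W n) \<omega>"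
    unfolding W_def using Xs by (blast intro: admissible_Linf_diff_bounds[OF adm _ X X_le])
  then have sandwich:
    "AE \<omega> in P. \<forall>n. 0 \<le> T (Xs n) \<omega> - T X \<omega> \<and> T (Xs n) \<omega> - T X \<omega> \<le> M (W n) \<omega>"
    by (simp add: AE_all_countable)
  have "\<forall>n. AE \<omega> in P. T (Xs (Suc n)) \<omega> \<le> T (Xs n) \<omega>"
  proof
    fix n
    have "AE \<omega> in P. Xs (Suc n) \<omega> \<le> Xs n \<omega>"
      using conv by eventually_elim (simp add: decseq_Suc_iff)
    from admissible_Linf_diff_bounds[OF adm Xs[rule_format] Xs[rule_format] this]
    show "AE \<omega> in P. T (Xs (Suc n)) \<omega> \<le> T (Xs n) \<omega>" by eventually_elim simp
  qed
  then have decreasing: "AE \<omega> in P. \<forall>n. T (Xs (Suc n)) \<omega> \<le> T (Xs n) \<omega>"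
    by (simp add: AE_all_countable)
  from M_W sandwich decreasing
  show "AE \<omega> in P. decseq (\<lambda>n. T (Xs n) \<omega>) \<and> (\<lambda>n. T (Xs n) \<omega>) \<longlonglongrightarrow> T X \<omega>"
  proof eventually_elim
    case (elim \<omega>)
    show ?case by (rule decseq_tendsto_squeeze[where e="\<lambda>n. M (W n) \<omega>"]) (use elim in auto)
  qed
qed

end

theorem theorem3p11:
  fixes P \<A> \<B> :: "'a measure"
    and L :: "('a \<Rightarrow> real) set"
    and Mop mop x :: "('a \<Rightarrow> real) \<Rightarrow> ('a \<Rightarrow> real)"
  assumes "prob_space P" and "complete_measure P"
    and "subalgebra P \<A>" and "subalgebra P \<B>" and "sets \<A> \<subseteq> sets \<B>"
    and "\<exists>G. countable G \<and> G \<subseteq> sets P \<and>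
           sets \<B> = sigma_sets (space P) (G \<union> null_sets P)"
    and "lin_subspace L" and "L \<subseteq> Linf P \<B>"
    and "op_between P (Linf_pos P \<B>) (Linf_pos P \<A>) Mop"
    and "sublinear_op P (Linf_pos P \<B>) Mop" and "regular_op P (Linf_pos P \<B>) Mop"
    and "op_between P (Linf_pos P \<B>) (Linf_pos P \<A>) mop"
    and "superlinear_op P (Linf_pos P \<B>) mop"
    and "op_between P L (Linf P \<A>) x" and "linear_op P L x"
    and "\<forall>X\<in>L. \<forall>Y\<in>Linf_pos P \<B>. \<forall>Z\<in>Linf_pos P \<B>.
           ae_le P (\<lambda>\<omega>. Z \<omega> + X \<omega>) Y \<longrightarrow> ae_le P (\<lambda>\<omega>. mop Z \<omega> + x X \<omega>) (Mop Y)"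
  shows "\<exists>x'. (\<forall>X\<in>L. ae_eq P (x' X) (x X)) \<and>
           op_between P (Linf P \<B>) (Linf P \<A>) x' \<and>
           linear_op P (Linf P \<B>) x' \<and>
           monotone_op P (Linf P \<B>) x' \<and>
           cont_above_op P (Linf P \<B>) x' \<and>
           (\<forall>X\<in>Linf P \<B>. \<forall>Y\<in>Linf_pos P \<B>. \<forall>Z\<in>Linf_pos P \<B>.
              ae_le P (\<lambda>\<omega>. Z \<omega> + X \<omega>) Y \<longrightarrow> ae_le P (\<lambda>\<omega>. mop Z \<omega> + x' X \<omega>) (Mop Y)) \<and>
           (\<forall>X\<in>Linf_pos P \<B>. ae_le P (mop X) (x' X) \<and> ae_le P (x' X) (Mop X))"
proof -
  interpret sandwich P \<A> \<B> Mop mop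
    by (rule sandwich.intro[OF assms(1,3,9,10,12,13)])
  have "dominated L x" using assms(16) by (simp add: dominated_def)
  then obtain D T where adm_D: "admissible D T" "L \<subseteq> D" and T_x: "\<And>X. X \<in> L \<Longrightarrow> ae_eq P (T X) (x X)"
    using admissible_ae_closure[OF assms(7,8,14,15)] by blast
  obtain x' where adm: "admissible (Linf P \<B>) x'" and ext: "\<And>X. X \<in> D \<Longrightarrow> x' X = T X"
    by (rule admissible_extend_to_Linf[OF adm_D(1)]) (rule that)
  have "\<forall>X\<in>L. ae_eq P (x' X) (x X)" using ext T_x \<open>L \<subseteq> D\<close> by auto
  moreover have "\<forall>X\<in>Linf_pos P \<B>. ae_le P (mop X) (x' X) \<and> ae_le P (x' X) (Mop X)"
    using admissible_Linf_bounds[OF adm] by (simp add: ae_le_def)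
  ultimately show ?thesis
    using adm admissible_Linf_monotone[OF adm] admissible_Linf_cont_above[OF assms(11) adm]
    by (auto simp: admissible_def dominated_def)
qed

end
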